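(* Assume $k = 1$ and values are i.i.d. (all $F_i = F$ on $[0,\bar v]$). Fix $r \ge 0$ and let $A$ be the allocation rule that gives the item to a highest-value bidder if that value is at least $r$, and to no one otherwise. Then among all (non-negative) payment rules $P$ implementing $A$, the winner-pays-bid rule (with $b^{\mathrm{WPB}}(v_i) = 0$ for $v_i < r$) minimizes $\mathbb E[g(\sum_i P_i(\bm v))]$ for every convex $g : \mathbb R \to \mathbb R$ (for which the expectations exist).
   Context: Setting: $n$ risk-neutral unit-demand bidders and $k$ identical items, $1 \le k < n$. Bidder $i$ has private value $v_i \in \mathcal V_i = [0,\bar v_i]$, drawn independently across bidders from a distribution $F_i$ with density $f_i > 0$ on $\mathcal V_i$; $\bm v = (v_1,\dots,v_n)$, $\mathcal V = \prod_i \mathcal V_i$. An allocation rule is a measurable map $A : \mathcal V \to \{0,1\}^n$ with $\sum_i A_i(\bm v) \le k$. Its interim allocation is $x_i(v_i) = \mathbb E[A_i(\bm v) \mid v_i]$; its interim payment function is $z_i(v_i) = v_i x_i(v_i) - \int_0^{v_i} x_i(u)\,du$. A payment rule is a measurable map $P : \mathcal V \to [0,\infty)^n$ (payments are non-negative). $P$ implements $A$ if $(A,P)$ is Bayesian incentive compatible, i.e. $\mathbb E[v_i A_i(\bm v) - P_i(\bm v) \mid v_i] \ge \mathbb E[v_i A_i(v_i',\bm v_{-i}) - P_i(v_i',\bm v_{-i}) \mid v_i]$ for all $i, v_i, v_i'$, and satisfies revenue equivalence $\mathbb E[P_i(\bm v) \mid v_i] = z_i(v_i)$ for all $i, v_i$.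 The winner-pays-bid (WPB) payment rule is $P_i^{\mathrm{WPB}}(\bm v) = b^{\mathrm{WPB}}(v_i) A_i(\bm v)$ with $b^{\mathrm{WPB}}(v_i) = z_i(v_i)/x_i(v_i)$ when $x_i(v_i) > 0$ and $b^{\mathrm{WPB}}(v_i) = 0$ otherwise. *)

theory Defs
  imports "HOL-Probability.Probability"
begin

definition val_space :: "nat \<Rightarrow> real measure \<Rightarrow> (nat \<Rightarrow> real) measure" where
  "val_space n M = PiM {..<n} (\<lambda>_. M)"

text \<open>Interim expectation E[h(v) | v_i = t] under independent values:
  integrate over the other coordinates with coordinate i fixed to t.\<close>
definition interim ::
  "nat \<Rightarrow> real measure \<Rightarrow> ((nat \<Rightarrow> real) \<Rightarrow> real) \<Rightarrow> nat \<Rightarrow> real \<Rightarrow> real" where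
  "interim n M h i t = (\<integral>w. h (w(i := t)) \<partial>(val_space n M))"

definition interim_alloc ::
  "nat \<Rightarrow> real measure \<Rightarrow> ((nat \<Rightarrow> real) \<Rightarrow> nat \<Rightarrow> real) \<Rightarrow> nat \<Rightarrow> real \<Rightarrow> real" where
  "interim_alloc n M A i t = interim n M (\<lambda>v. A v i) i t"

definition interim_pay ::
  "nat \<Rightarrow> real measure \<Rightarrow> ((nat \<Rightarrow> real) \<Rightarrow> nat \<Rightarrow> real) \<Rightarrow> nat \<Rightarrow> real \<Rightarrow> real" where
  "interim_pay n M A i t =
     t * interim_alloc n M A i t - (\<integral>u\<in>{0..t}. interim_alloc n M A i u \<partial>lborel)"

text \<open>P implements A: P is a measurable non-negative payment rule, (A,P) is
  Bayesian incentive compatible, and revenue equivalence holds (the interim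
  expectations involved are required to exist).\<close>
definition implements ::
  "nat \<Rightarrow> real measure \<Rightarrow> real \<Rightarrow> ((nat \<Rightarrow> real) \<Rightarrow> nat \<Rightarrow> real)
    \<Rightarrow> ((nat \<Rightarrow> real) \<Rightarrow> nat \<Rightarrow> real) \<Rightarrow> bool" where
  "implements n M vbar A P \<longleftrightarrow>
     (\<forall>i<n. (\<lambda>v. P v i) \<in> borel_measurable (val_space n M)) \<and>
     (\<forall>v\<in>space (val_space n M). \<forall>i<n. 0 \<le> P v i) \<and>
     (\<forall>i<n. \<forall>t\<in>{0..vbar}. integrable (val_space n M) (\<lambda>w. P (w(i := t)) i)) \<and>
     (\<forall>i<n. \<forall>t\<in>{0..vbar}. \<forall>t'\<in>{0..vbar}.
        interim n M (\<lambda>v. v i * A v i - P v i) i t \<ge>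
        interim n M (\<lambda>v. v i * A (v(i := t')) i - P (v(i := t')) i) i t) \<and>
     (\<forall>i<n. \<forall>t\<in>{0..vbar}. interim n M (\<lambda>v. P v i) i t = interim_pay n M A i t)"

definition bid_wpb ::
  "nat \<Rightarrow> real measure \<Rightarrow> ((nat \<Rightarrow> real) \<Rightarrow> nat \<Rightarrow> real) \<Rightarrow> nat \<Rightarrow> real \<Rightarrow> real" where
  "bid_wpb n M A i t =
     (if interim_alloc n M A i t > 0
      then interim_pay n M A i t / interim_alloc n M A i t else 0)"

definition pay_wpb ::
  "nat \<Rightarrow> real measure \<Rightarrow> ((nat \<Rightarrow> real) \<Rightarrow> nat \<Rightarrow> real) \<Rightarrow> (nat \<Rightarrow> real) \<Rightarrow> nat \<Rightarrow> real" where
  "pay_wpb n M A v i = bid_wpb n M A i (v i) * A v i"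

end

theory Submission
  imports Defs
begin

text \<open>Under the reserve-price auction every bidder's interim allocation is the same
  nondecreasing function x, so the winner-pays-bid bid B(t) = z(t)/x(t) is nondecreasing and
  the WPB revenue S is the bid of the highest bidder, whence B(v_i) \<le> S for all i. Let T be
  the revenue of another implementing rule P and D a monotone subgradient of g. Revenue
  equivalence fixes E[P_i | v_i] = z(v_i), so
  E[D(S) T] \<ge> \<Sum>_i E[D(B(v_i)) P_i] = \<Sum>_i E[D(B(v_i)) z(v_i)] = E[D(S) S],
  and E g(T) \<ge> E[g(S) + D(S)(T - S)] \<ge> E g(S).\<close>

section \<open>Monotone subgradients of convex functions\<close>

lemma convex_on_consecutive_slopes_le:
  fixes g :: "real \<Rightarrow> real"
  assumes g: "convex_on UNIV g" and "a < b" "b < c"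
  shows "(g b - g a) / (b - a) \<le> (g c - g b) / (c - b)"
proof -
  have "(g a - g b) / (a - b) \<le> (g b - g c) / (b - c)"
    using convex_on_slope_le[OF g _ _ assms(2,3)] by (meson UNIV_I order_trans)
  then show ?thesis
    by (metis minus_diff_eq minus_divide_divide)
qed

text \<open>The right derivative of a convex function is a monotone subgradient.\<close>

lemma convex_on_monotone_subgradient:
  fixes g :: "real \<Rightarrow> real"
  assumes g: "convex_on UNIV g"
  obtains D where "mono D" and "\<And>x y. g y + D y * (x - y) \<le> g x"
proof -
  define D where "D y = Inf ((\<lambda>h. (g (y + h) - g y) / h) ` {0<..})" for y
  have slope_le: "(g y - g a) / (y - a) \<le> (g (y + h) - g y) / h" if "a < y" "0 < h" for a y h
    using convex_on_consecutive_slopes_le[OF g that(1), of "y + h"] that by simp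
  have D_le: "D y \<le> (g (y + h) - g y) / h" if "0 < h" for y h
    unfolding D_def
    by (rule cInf_lower) (use that slope_le[of "y - 1" y] in \<open>auto intro!: bdd_belowI2\<close>)
  have le_D: "(g y - g a) / (y - a) \<le> D y" if "a < y" for a y
    unfolding D_def by (rule cInf_greatest) (use that slope_le in auto)
  have "mono D"
  proof (rule monoI)
    fix y y' :: real assume "y \<le> y'"
    show "D y \<le> D y'"
    proof (cases "y = y'")
      case False
      then have "y < y'" using \<open>y \<le> y'\<close> by simp
      then have "D y \<le> (g y' - g y) / (y' - y)" using D_le[of "y' - y" y] by simp
      also have "\<dots> \<le> D y'" using le_D \<open>y < y'\<close> by blast
      finally show ?thesis .
    qed simp
  qed
  moreover have "g y + D y * (x - y) \<le> g x" for x y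
  proof (cases x y rule: linorder_cases)
    case less
    then show ?thesis using le_D[OF less] by (simp add: divide_le_eq algebra_simps)
  next
    case greater
    then show ?thesis using D_le[of "x - y" y] by (simp add: le_divide_eq)
  qed simp
  ultimately show ?thesis using that by blast
qed

lemma mono_abs_le_on_Icc:
  fixes D :: "real \<Rightarrow> real"
  assumes "mono D" "y \<in> {a..b}"
  shows "\<bar>D y\<bar> \<le> \<bar>D a\<bar> + \<bar>D b\<bar>"
  using assms monoD[of D a y] monoD[of D y b] by auto

section \<open>Resampling one coordinate of an i.i.d. vector\<close>

lemma PiE_fun_upd_iff:
  assumes "i \<in> I" and "\<And>j. j \<in> I \<Longrightarrow> B j \<subseteq> S"
  shows "w(i := t) \<in> PiE I B \<and> w \<in> PiE I (\<lambda>_. S) \<longleftrightarrow> t \<in> B i \<and> w \<in> PiE I (B(i := S))"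
  using assms by (auto simp: PiE_iff extensional_def split: if_splits)

context prob_space
begin

lemma measurable_PiM_fun_upd_pair:
  assumes "i \<in> I"
  shows "(\<lambda>p. (snd p)(i := fst p)) \<in> measurable (M \<Otimes>\<^sub>M PiM I (\<lambda>_. M)) (PiM I (\<lambda>_. M))"
  by (rule measurable_fun_upd[where J=I]) (use assms in auto)

lemma distr_PiM_fun_upd:
  assumes I: "finite I" "i \<in> I"
  shows "distr (M \<Otimes>\<^sub>M PiM I (\<lambda>_. M)) (PiM I (\<lambda>_. M)) (\<lambda>p. (snd p)(i := fst p)) = PiM I (\<lambda>_. M)"
    (is "distr ?MV ?V ?upd = _")
proof -
  interpret product_sigma_finite "\<lambda>_. M"
    by (simp add: product_sigma_finite_def sigma_finite_measure)
  interpret V: prob_space ?V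
    by (rule prob_space_PiM) (rule prob_space_axioms)
  show ?thesis
  proof (rule PiM_eqI)
    fix B assume B: "\<And>j. j \<in> I \<Longrightarrow> B j \<in> sets M"
    have B': "\<And>j. j \<in> I \<Longrightarrow> (B(i := space M)) j \<in> sets M"
      using B by simp
    have preimage: "?upd -` PiE I B \<inter> space ?MV = B i \<times> PiE I (B(i := space M))"
    proof (rule set_eqI)
      fix p :: "'a \<times> ('b \<Rightarrow> 'a)"
      have "B j \<subseteq> space M" if "j \<in> I" for j
        using B[OF that] by (rule sets.sets_into_space)
      then show "p \<in> ?upd -` PiE I B \<inter> space ?MV \<longleftrightarrow> p \<in> B i \<times> PiE I (B(i := space M))"
        using PiE_fun_upd_iff[OF I(2), of B "space M" "snd p" "fst p"] I(2)
        by (cases p) (auto simp: space_pair_measure space_PiM)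
    qed
    have "emeasure (distr ?MV ?V ?upd) (PiE I B) = emeasure ?MV (B i \<times> PiE I (B(i := space M)))"
      using B I by (simp add: emeasure_distr measurable_PiM_fun_upd_pair preimage sets_PiM_I_finite)
    also have "\<dots> = emeasure M (B i) * (\<Prod>j\<in>I. emeasure M ((B(i := space M)) j))"
      using B B' I by (simp add: V.emeasure_pair_measure_Times sets_PiM_I_finite emeasure_PiM)
    also have "\<dots> = (\<Prod>j\<in>I. emeasure M (B j))"
      using I by (simp add: prod.remove[of I i] emeasure_space_1 cong: prod.cong_simp)
    finally show "emeasure (distr ?MV ?V ?upd) (PiE I B) = (\<Prod>j\<in>I. emeasure M (B j))" .
  qed (use I in simp_all)
qed

lemma integral_PiM_fun_upd:
  fixes h :: "(_ \<Rightarrow> 'a) \<Rightarrow> real"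
  assumes I: "finite I" "i \<in> I" and h: "integrable (PiM I (\<lambda>_. M)) h"
  shows "integral\<^sup>L (PiM I (\<lambda>_. M)) h = (\<integral>t. (\<integral>w. h (w(i := t)) \<partial>PiM I (\<lambda>_. M)) \<partial>M)"
proof -
  interpret V: prob_space "PiM I (\<lambda>_. M)"
    by (rule prob_space_PiM) (rule prob_space_axioms)
  interpret pair_sigma_finite M "PiM I (\<lambda>_. M)"
    by (intro pair_sigma_finite.intro sigma_finite_measure V.sigma_finite_measure)
  note upd = measurable_PiM_fun_upd_pair[OF I(2)] and law = distr_PiM_fun_upd[OF I]
  have "integrable (M \<Otimes>\<^sub>M PiM I (\<lambda>_. M)) (\<lambda>p. h ((snd p)(i := fst p)))"
    using h by (simp add: integrable_distr_eq[OF upd, symmetric] law)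
  then show ?thesis
    using integral_distr[OF upd, of h] integral_fst'[of "\<lambda>p. h ((snd p)(i := fst p))"] h
    by (simp add: law)
qed

lemma nn_integral_PiM_fun_upd:
  assumes I: "finite I" "i \<in> I" and h: "h \<in> borel_measurable (PiM I (\<lambda>_. M))"
  shows "integral\<^sup>N (PiM I (\<lambda>_. M)) h = (\<integral>\<^sup>+t. (\<integral>\<^sup>+w. h (w(i := t)) \<partial>PiM I (\<lambda>_. M)) \<partial>M)"
proof -
  interpret V: prob_space "PiM I (\<lambda>_. M)"
    by (rule prob_space_PiM) (rule prob_space_axioms)
  note upd = measurable_PiM_fun_upd_pair[OF I(2)] and law = distr_PiM_fun_upd[OF I]
  have "integral\<^sup>N (PiM I (\<lambda>_. M)) h = (\<integral>\<^sup>+p. h ((snd p)(i := fst p)) \<partial>(M \<Otimes>\<^sub>M PiM I (\<lambda>_. M)))"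
    using nn_integral_distr[OF upd, of h] h by (simp add: law)
  also have "\<dots> = (\<integral>\<^sup>+t. (\<integral>\<^sup>+w. h (w(i := t)) \<partial>PiM I (\<lambda>_. M)) \<partial>M)"
    using V.nn_integral_fst[of "\<lambda>p. h ((snd p)(i := fst p))" M] upd h by simp
  finally show ?thesis .
qed

end

section \<open>Myerson payments of a monotone allocation\<close>

text \<open>The interim payment z and the WPB bid z/x of the definitions, as functions of the
  interim allocation x alone.\<close>

definition myerson_pay :: "(real \<Rightarrow> real) \<Rightarrow> real \<Rightarrow> real" where
  "myerson_pay x t = t * x t - (LINT u:{0..t}|lborel. x u)"

definition myerson_bid :: "(real \<Rightarrow> real) \<Rightarrow> real \<Rightarrow> real" where
  "myerson_bid x t = (if 0 < x t then myerson_pay x t / x t else 0)"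

locale monotone_alloc =
  fixes x :: "real \<Rightarrow> real"
  assumes mono_alloc: "mono x"
    and alloc_neg: "\<And>t. t < 0 \<Longrightarrow> x t = 0"
begin

lemma alloc_le: "s \<le> t \<Longrightarrow> x s \<le> x t"
  using mono_alloc by (rule monoD)

lemma alloc_nonneg: "0 \<le> x t"
  using alloc_neg[of t] alloc_neg[of "-1"] alloc_le[of "-1" t] by (cases "t < 0") auto

lemma set_integrable_alloc:
  assumes "S \<in> sets borel" "S \<subseteq> {a..c}"
  shows "set_integrable lborel S x"
  unfolding set_integrable_def
proof (rule integrableI_bounded_set[where A=S and B="x c"])
  show "emeasure lborel S < \<infinity>"
    using assms by (intro emeasure_bounded_finite bounded_subset[OF bounded_closed_interval])
  show "AE u in lborel. u \<in> S \<longrightarrow> norm (indicat_real S u *\<^sub>R x u) \<le> x c"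
    using assms alloc_le alloc_nonneg by (intro AE_I2) auto
qed (use assms borel_measurable_mono[OF mono_alloc] in auto)

lemma set_integral_alloc_bounds:
  assumes S: "S \<in> sets borel" "S \<subseteq> {a..c}"
  shows "measure lborel S * x a \<le> (LINT u:S|lborel. x u)"
    and "(LINT u:S|lborel. x u) \<le> measure lborel S * x c"
proof -
  have fin: "emeasure lborel S \<noteq> \<infinity>"
    using S by (intro less_imp_neq emeasure_bounded_finite bounded_subset[OF bounded_closed_interval])
  have S_le: "a \<le> u" "u \<le> c" if "u \<in> S" for u
    using S that by auto
  have const: "set_integrable lborel S (\<lambda>_. y)" for y :: real
    using S fin by (simp add: set_integrable_def less_top)
  have "(LINT u:S|lborel. x a) \<le> (LINT u:S|lborel. x u)"
    using S by (intro set_integral_mono const set_integrable_alloc) (auto intro: alloc_le dest: S_le)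
  then show "measure lborel S * x a \<le> (LINT u:S|lborel. x u)"
    using S fin by (simp add: set_integral_const)
  have "(LINT u:S|lborel. x u) \<le> (LINT u:S|lborel. x c)"
    using S by (intro set_integral_mono const set_integrable_alloc) (auto intro: alloc_le dest: S_le)
  then show "(LINT u:S|lborel. x u) \<le> measure lborel S * x c"
    using S fin by (simp add: set_integral_const)
qed

lemma integral_alloc_bounds:
  assumes "0 \<le> t"
  shows "0 \<le> (LINT u:{0..t}|lborel. x u)" and "(LINT u:{0..t}|lborel. x u) \<le> t * x t"
proof -
  have len: "measure lborel {0..t} = t"
    using assms by simp
  have "0 \<le> t * x 0"
    using assms alloc_nonneg by simp
  then show "0 \<le> (LINT u:{0..t}|lborel. x u)"
    using set_integral_alloc_bounds(1)[of "{0..t}" 0 t, unfolded len] by simp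
  show "(LINT u:{0..t}|lborel. x u) \<le> t * x t"
    using set_integral_alloc_bounds(2)[of "{0..t}" 0 t, unfolded len] by simp
qed

lemma integral_alloc_increment_bounds:
  assumes "0 \<le> a" "a \<le> c"
  shows "(c - a) * x a \<le> (LINT u:{0..c}|lborel. x u) - (LINT u:{0..a}|lborel. x u)"
    and "(LINT u:{0..c}|lborel. x u) - (LINT u:{0..a}|lborel. x u) \<le> (c - a) * x c"
proof -
  have "{0..c} = {0..a} \<union> {a<..c}" using assms by auto
  moreover have "set_integrable lborel {0..a} x" "set_integrable lborel {a<..c} x"
    using assms by (auto intro: set_integrable_alloc[of _ 0 c])
  ultimately have split: "(LINT u:{0..c}|lborel. x u)
      = (LINT u:{0..a}|lborel. x u) + (LINT u:{a<..c}|lborel. x u)"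
    by (simp add: set_integral_Un[of "{0..a}" "{a<..c}"] disjoint_iff)
  have sub: "{a<..c} \<subseteq> {a..c}" by auto
  have len: "measure lborel {a<..c} = c - a"
    using assms by simp
  show "(c - a) * x a \<le> (LINT u:{0..c}|lborel. x u) - (LINT u:{0..a}|lborel. x u)"
    using set_integral_alloc_bounds(1)[OF _ sub, unfolded len] split by simp
  show "(LINT u:{0..c}|lborel. x u) - (LINT u:{0..a}|lborel. x u) \<le> (c - a) * x c"
    using set_integral_alloc_bounds(2)[OF _ sub, unfolded len] split by simp
qed

lemma myerson_pay_nonneg: "0 \<le> myerson_pay x t"
  using integral_alloc_bounds[of t] alloc_neg[of t]
  by (cases "0 \<le> t") (auto simp: myerson_pay_def set_lebesgue_integral_def)

lemma myerson_pay_le: "0 \<le> t \<Longrightarrow> myerson_pay x t \<le> t * x t"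
  using integral_alloc_bounds[of t] by (simp add: myerson_pay_def)

lemma myerson_pay_eq_0: "x t = 0 \<Longrightarrow> myerson_pay x t = 0"
  using myerson_pay_nonneg[of t] integral_alloc_bounds[of t]
  by (cases "0 \<le> t") (auto simp: myerson_pay_def set_lebesgue_integral_def)

lemma myerson_bid_mult: "myerson_bid x t * x t = myerson_pay x t"
  using alloc_nonneg[of t] myerson_pay_eq_0[of t] by (auto simp: myerson_bid_def)

lemma myerson_bid_nonneg: "0 \<le> myerson_bid x t"
  using myerson_pay_nonneg[of t] by (simp add: myerson_bid_def)

lemma myerson_bid_le: "0 \<le> t \<Longrightarrow> myerson_bid x t \<le> t"
  using myerson_pay_le[of t] by (auto simp: myerson_bid_def divide_le_eq)

text \<open>Bids shade the value by the average-allocation term I(t)/x(t); between s and t the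
  value grows by t - s while the shading term grows by at most as much.\<close>

lemma mono_myerson_bid: "mono (myerson_bid x)"
proof (rule monoI)
  fix s t :: real assume st: "s \<le> t"
  show "myerson_bid x s \<le> myerson_bid x t"
  proof (cases "0 < x s")
    case False
    then show ?thesis using myerson_bid_nonneg[of t] by (simp add: myerson_bid_def)
  next
    case True
    define I where "I t = (LINT u:{0..t}|lborel. x u)" for t
    have s: "0 \<le> s" using True alloc_neg[of s] by force
    have xt: "0 < x t" using True alloc_le[OF st] by simp
    have Is: "0 \<le> I s" using integral_alloc_bounds[OF s] by (simp add: I_def)
    have "I s / x t \<le> I s / x s" using Is True alloc_le[OF st] by (intro divide_left_mono) auto
    moreover have "(I t - I s) / x t \<le> t - s"
      using integral_alloc_increment_bounds(2)[OF s st] xt by (simp add: I_def divide_le_eq)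
    ultimately have "s - I s / x s \<le> t - I t / x t"
      by (simp add: diff_divide_distrib)
    then show ?thesis
      using True xt by (simp add: myerson_bid_def myerson_pay_def I_def diff_divide_distrib)
  qed
qed

lemma borel_measurable_myerson_bid: "myerson_bid x \<in> borel_measurable borel"
  by (rule borel_measurable_mono[OF mono_myerson_bid])

lemma borel_measurable_myerson_pay: "myerson_pay x \<in> borel_measurable borel"
proof -
  have "myerson_pay x = (\<lambda>t. myerson_bid x t * x t)"
    by (simp add: fun_eq_iff myerson_bid_mult)
  then show ?thesis
    using borel_measurable_myerson_bid borel_measurable_mono[OF mono_alloc] by simp
qed

lemma myerson_pay_incentive_compatible:
  assumes "0 \<le> t" "0 \<le> t'"
  shows "t * x t' - myerson_pay x t' \<le> t * x t - myerson_pay x t"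
proof (cases "t' \<le> t")
  case True
  then show ?thesis
    using integral_alloc_increment_bounds(1)[OF assms(2) True, unfolded left_diff_distrib]
    by (simp add: myerson_pay_def)
next
  case False
  then show ?thesis
    using integral_alloc_increment_bounds(2)[OF assms(1), of t', unfolded left_diff_distrib]
    by (simp add: myerson_pay_def)
qed

end

section \<open>The single-item auction with reserve price\<close>

locale reserve_auction = prob_space M
  for M :: "real measure" +
  fixes n :: nat and vbar r :: real
    and A :: "(nat \<Rightarrow> real) \<Rightarrow> nat \<Rightarrow> real"
  assumes sets_values: "sets M = sets borel"
    and no_atoms: "\<And>t. emeasure M {t} = 0"
    and values_bounded: "AE t in M. t \<in> {0..vbar}"
    and reserve_nonneg: "0 \<le> r"
    and A_meas: "\<forall>i<n. (\<lambda>v. A v i) \<in> borel_measurable (val_space n M)"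
    and A_01: "\<forall>v\<in>space (val_space n M). \<forall>i<n. A v i \<in> {0, 1}"
    and A_feas: "\<forall>v\<in>space (val_space n M). (\<Sum>i<n. A v i) \<le> 1"
    and A_win: "\<forall>v\<in>space (val_space n M). \<forall>i<n.
                  A v i = 1 \<longrightarrow> r \<le> v i \<and> (\<forall>j<n. v j \<le> v i)"
    and A_alloc: "\<forall>v\<in>space (val_space n M).
                  (\<exists>i<n. r \<le> v i) \<longrightarrow> (\<exists>i<n. A v i = 1)"
begin

abbreviation V :: "(nat \<Rightarrow> real) measure" where
  "V \<equiv> val_space n M"

declare sets_values [simp]

lemma space_values [simp]: "space M = UNIV"
  using sets_eq_imp_space_eq[OF sets_values] by simp

lemma vbar_nonneg: "0 \<le> vbar"
proof -
  have "AE t in M. 0 \<le> vbar"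
    using values_bounded by eventually_elim auto
  then show ?thesis by simp
qed

lemma space_V: "space V = {..<n} \<rightarrow>\<^sub>E UNIV"
  by (simp add: val_space_def space_PiM)

lemma fun_upd_in_space_V: "w \<in> space V \<Longrightarrow> i < n \<Longrightarrow> w(i := t) \<in> space V"
  by (auto simp: space_V PiE_iff extensional_def)

sublocale V: prob_space V
  unfolding val_space_def by (rule prob_space_PiM) (rule prob_space_axioms)

lemma measurable_fun_upd_V: "i < n \<Longrightarrow> (\<lambda>w. w(i := t)) \<in> measurable V V"
  unfolding val_space_def by (rule measurable_fun_upd[where J="{..<n}"]) auto

lemma measurable_fun_upd_pair_V: "i < n \<Longrightarrow> (\<lambda>p. (snd p)(i := fst p)) \<in> measurable (M \<Otimes>\<^sub>M V) V"
  unfolding val_space_def by (rule measurable_PiM_fun_upd_pair) simp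

lemma measurable_component_V: "i < n \<Longrightarrow> (\<lambda>v. v i) \<in> borel_measurable V"
  using measurable_component_singleton[of i "{..<n}" "\<lambda>_. M"]
  by (simp add: val_space_def measurable_cong_sets[OF refl sets_values])

lemma AE_component_V:
  assumes "i < n" and "AE t in M. P t"
  shows "AE w in V. P (w i)"
proof -
  have "distr V M (\<lambda>w. w i) = M"
    unfolding val_space_def by (rule distr_PiM_component) (use assms prob_space_axioms in auto)
  moreover have "(\<lambda>w. w i) \<in> measurable V M"
    unfolding val_space_def by (rule measurable_component_singleton) (use assms in auto)
  ultimately show ?thesis
    using AE_distrD[of "\<lambda>w. w i" V M P] assms(2) by metis
qed

lemma AE_values_bounded_V: "AE v in V. \<forall>i<n. v i \<in> {0..vbar}"
proof -
  have "AE v in V. \<forall>i\<in>{..<n}. v i \<in> {0..vbar}"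
    using AE_component_V[OF _ values_bounded] by (intro AE_finite_allI) auto
  then show ?thesis by (rule eventually_mono) auto
qed

definition win_prob :: "real \<Rightarrow> real" where
  "win_prob t = (if r \<le> t then measure M {..<t} ^ (n - 1) else 0)"

lemma win_prob_le_1: "win_prob t \<le> 1"
  by (simp add: win_prob_def power_le_one)

sublocale win_prob: monotone_alloc win_prob
proof
  show "mono win_prob"
  proof (rule monoI)
    fix s t :: real assume "s \<le> t"
    then have "measure M {..<s} \<le> measure M {..<t}"
      by (intro finite_measure_mono) auto
    then show "win_prob s \<le> win_prob t"
      using \<open>s \<le> t\<close> by (simp add: win_prob_def power_mono)
  qed
  show "win_prob t = 0" if "t < 0" for t
    using that reserve_nonneg by (simp add: win_prob_def)
qed

abbreviation bid :: "real \<Rightarrow> real" where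
  "bid \<equiv> myerson_bid win_prob"

lemma allocation_fun_upd:
  assumes w: "w \<in> space V" and no_tie: "\<forall>j<n. w j \<noteq> t" and i: "i < n"
  shows "A (w(i := t)) i = (if r \<le> t then indicator (PiE {..<n} (\<lambda>j. if j = i then UNIV else {..<t})) w else 0)"
proof -
  let ?u = "w(i := t)"
  have u: "?u \<in> space V" using fun_upd_in_space_V[OF w i] .
  have others_below: "w \<in> PiE {..<n} (\<lambda>j. if j = i then UNIV else {..<t}) \<longleftrightarrow> (\<forall>j<n. j \<noteq> i \<longrightarrow> w j < t)"
    using w by (auto simp: space_V PiE_iff)
  show ?thesis
  proof (cases "r \<le> t \<and> (\<forall>j<n. j \<noteq> i \<longrightarrow> w j < t)")
    case True
    then obtain k where k: "k < n" "A ?u k = 1"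
      using A_alloc u i by (metis fun_upd_same)
    then have "\<forall>j<n. ?u j \<le> ?u k" using A_win u by blast
    then have "k = i"
      using True k i by (metis fun_upd_other fun_upd_same not_le)
    then show ?thesis using k True others_below by simp
  next
    case False
    have "A ?u i \<noteq> 1"
    proof
      assume "A ?u i = 1"
      then have "r \<le> t" "\<forall>j<n. ?u j \<le> t"
        using A_win u i by (metis fun_upd_same)+
      then show False
        using False no_tie by (metis fun_upd_other order_le_neq_trans)
    qed
    then have "A ?u i = 0" using A_01 u i by blast
    then show ?thesis using False others_below by auto
  qed
qed

lemma interim_alloc_eq:
  assumes i: "i < n"
  shows "interim_alloc n M A i = win_prob"
proof
  fix t :: real
  let ?E = "PiE {..<n} (\<lambda>j. if j = i then UNIV else {..<t})"
  have E: "?E \<in> sets V"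
    unfolding val_space_def by (intro sets_PiM_I_finite) auto
  have "AE w in V. \<forall>j\<in>{..<n}. w j \<noteq> t"
    by (intro AE_finite_allI AE_component_V AE_I[where N="{t}"]) (auto simp: no_atoms)
  then have "AE w in V. A (w(i := t)) i = (if r \<le> t then indicator ?E w else 0)"
    using AE_space[of V] by eventually_elim (simp add: allocation_fun_upd[OF _ _ i])
  then have "interim_alloc n M A i t = (\<integral>w. (if r \<le> t then indicator ?E w else 0) \<partial>V)"
    unfolding interim_alloc_def interim_def
    using measurable_compose[OF measurable_fun_upd_V[OF i]] A_meas i E
    by (intro integral_cong_AE) auto
  also have "\<dots> = (if r \<le> t then measure V ?E else 0)"
    using E by simp
  also have "measure V ?E = measure M {..<t} ^ (n - 1)"
  proof -
    interpret product_sigma_finite "\<lambda>_. M"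
      by (simp add: product_sigma_finite_def sigma_finite_measure)
    have "emeasure V ?E = (\<Prod>j<n. emeasure M (if j = i then UNIV else {..<t}))"
      unfolding val_space_def by (rule emeasure_PiM) auto
    also have "\<dots> = emeasure M {..<t} ^ (n - 1)"
      using i by (simp add: prod.remove[of "{..<n}" i] emeasure_space_1[simplified] cong: prod.cong_simp)
    finally show ?thesis
      by (simp add: V.emeasure_eq_measure emeasure_eq_measure ennreal_power)
  qed
  finally show "interim_alloc n M A i t = win_prob t"
    by (simp add: win_prob_def)
qed

lemma interim_pay_eq: "i < n \<Longrightarrow> interim_pay n M A i = myerson_pay win_prob"
  by (simp add: fun_eq_iff interim_pay_def myerson_pay_def interim_alloc_eq)

lemma pay_wpb_eq: "i < n \<Longrightarrow> pay_wpb n M A v i = bid (v i) * A v i"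
  by (simp add: pay_wpb_def bid_wpb_def myerson_bid_def interim_alloc_eq interim_pay_eq)

lemma integrable_allocation_fun_upd: "i < n \<Longrightarrow> integrable V (\<lambda>w. A (w(i := t)) i)"
proof (rule V.integrable_const_bound[where B=1])
  assume i: "i < n"
  show "AE w in V. norm (A (w(i := t)) i) \<le> 1"
    using AE_space[of V]
  proof eventually_elim
    case (elim w)
    then have "A (w(i := t)) i \<in> {0, 1}"
      using A_01 fun_upd_in_space_V i by blast
    then show ?case by auto
  qed
  show "(\<lambda>w. A (w(i := t)) i) \<in> borel_measurable V"
    using measurable_compose[OF measurable_fun_upd_V[OF i]] A_meas i by auto
qed

lemma integral_allocation_fun_upd:
  "i < n \<Longrightarrow> (\<integral>w. A (w(i := t)) i \<partial>V) = win_prob t"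
  using interim_alloc_eq[of i] by (simp add: interim_alloc_def interim_def fun_eq_iff)

lemma wpb_implements: "implements n M vbar A (pay_wpb n M A)"
  unfolding implements_def
proof (intro conjI allI impI ballI)
  fix i assume i: "i < n"
  show "(\<lambda>v. pay_wpb n M A v i) \<in> borel_measurable V"
    using measurable_compose[OF measurable_component_V[OF i] win_prob.borel_measurable_myerson_bid]
      A_meas i
    by (auto simp: pay_wpb_eq[OF i] intro!: borel_measurable_times)
  fix t assume "t \<in> {0..vbar}"
  show "integrable V (\<lambda>w. pay_wpb n M A (w(i := t)) i)"
    using integrable_allocation_fun_upd[OF i] by (simp add: pay_wpb_eq[OF i])
  show "interim n M (\<lambda>v. pay_wpb n M A v i) i t = interim_pay n M A i t"
    using integral_allocation_fun_upd[OF i]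
    by (simp add: interim_def pay_wpb_eq[OF i] interim_pay_eq[OF i] win_prob.myerson_bid_mult)
next
  fix v i assume "v \<in> space V" "i < n"
  then have "A v i \<in> {0, 1}"
    using A_01 by blast
  then show "0 \<le> pay_wpb n M A v i"
    using win_prob.myerson_bid_nonneg[of "v i"] \<open>i < n\<close> by (auto simp: pay_wpb_eq)
next
  fix i t t' assume i: "i < n" and t: "t \<in> {0..vbar}" and t': "t' \<in> {0..vbar}"
  have "interim n M (\<lambda>v. v i * A (v(i := s)) i - pay_wpb n M A (v(i := s)) i) i t
      = t * win_prob s - myerson_pay win_prob s" for s
  proof -
    have "interim n M (\<lambda>v. v i * A (v(i := s)) i - pay_wpb n M A (v(i := s)) i) i t
        = (\<integral>w. (t - bid s) * A (w(i := s)) i \<partial>V)"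
      unfolding interim_def by (rule Bochner_Integration.integral_cong) (auto simp: pay_wpb_eq[OF i] algebra_simps)
    also have "\<dots> = (t - bid s) * win_prob s"
      by (simp add: integral_allocation_fun_upd[OF i])
    finally show ?thesis
      by (simp add: left_diff_distrib win_prob.myerson_bid_mult)
  qed
  moreover have "interim n M (\<lambda>v. v i * A v i - pay_wpb n M A v i) i t
      = interim n M (\<lambda>v. v i * A (v(i := t)) i - pay_wpb n M A (v(i := t)) i) i t"
    by (simp add: interim_def)
  ultimately show
    "interim n M (\<lambda>v. v i * A (v(i := t')) i - pay_wpb n M A (v(i := t')) i) i t
      \<le> interim n M (\<lambda>v. v i * A v i - pay_wpb n M A v i) i t"
    using win_prob.myerson_pay_incentive_compatible[of t t'] t t' by simp
qed

lemma interim_payment: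
  assumes "implements n M vbar A Q" "i < n" "t \<in> {0..vbar}"
  shows "(\<integral>w. Q (w(i := t)) i \<partial>V) = myerson_pay win_prob t"
  using assms by (simp add: implements_def interim_def interim_pay_eq)

lemma implements_integrable:
  assumes Q: "implements n M vbar A Q" and i: "i < n"
  shows "integrable V (\<lambda>v. Q v i)"
proof (rule integrableI_nonneg)
  show Qm: "(\<lambda>v. Q v i) \<in> borel_measurable V"
    using Q i by (simp add: implements_def)
  show "AE v in V. 0 \<le> Q v i"
    using Q i by (auto simp: implements_def intro!: AE_I2)
  have "(\<integral>\<^sup>+v. ennreal (Q v i) \<partial>V) = (\<integral>\<^sup>+t. (\<integral>\<^sup>+w. ennreal (Q (w(i := t)) i) \<partial>V) \<partial>M)"
    using Qm i unfolding val_space_def by (intro nn_integral_PiM_fun_upd) auto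
  also have "\<dots> \<le> (\<integral>\<^sup>+t. ennreal vbar \<partial>M)"
    using values_bounded
  proof (intro nn_integral_mono_AE, eventually_elim)
    case (elim t)
    have "(\<integral>\<^sup>+w. ennreal (Q (w(i := t)) i) \<partial>V) = ennreal (myerson_pay win_prob t)"
      using Q i elim fun_upd_in_space_V
      by (subst nn_integral_eq_integral)
        (auto simp: implements_def interim_payment intro!: AE_I2)
    also have "\<dots> \<le> ennreal vbar"
    proof (intro ennreal_leI order_trans[OF win_prob.myerson_pay_le])
      show "t * win_prob t \<le> vbar"
        using mult_left_le[OF win_prob_le_1, of t t] elim by simp
    qed (use elim in simp)
    finally show ?case .
  qed
  also have "\<dots> < \<infinity>"
    by (simp add: emeasure_space_1[simplified])
  finally show "(\<integral>\<^sup>+v. ennreal (Q v i) \<partial>V) < \<infinity>" .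
qed

text \<open>Revenue equivalence fixes the interim payment of each bidder, hence also every
  expectation of a payment weighted by a function of the payer's own value.\<close>

lemma integral_value_weighted_payment:
  assumes Q: "implements n M vbar A Q" and i: "i < n"
    and phi: "phi \<in> borel_measurable borel" and phi_bounded: "\<And>t. t \<in> {0..vbar} \<Longrightarrow> \<bar>phi t\<bar> \<le> K"
  shows "integrable V (\<lambda>v. phi (v i) * Q v i)"
    and "(\<integral>v. phi (v i) * Q v i \<partial>V) = (\<integral>t. phi t * myerson_pay win_prob t \<partial>M)"
proof -
  have Qm: "(\<lambda>v. Q v i) \<in> borel_measurable V"
    using Q i by (simp add: implements_def)
  have hm: "(\<lambda>v. phi (v i) * Q v i) \<in> borel_measurable V"
    using measurable_compose[OF measurable_component_V[OF i] phi] Qm by measurable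
  show int: "integrable V (\<lambda>v. phi (v i) * Q v i)"
  proof (rule Bochner_Integration.integrable_bound[OF integrable_mult_right hm])
    show "integrable V (\<lambda>v. Q v i)"
      using implements_integrable[OF Q i] .
    show "AE v in V. norm (phi (v i) * Q v i) \<le> norm (K * Q v i)"
      using AE_values_bounded_V AE_space[of V]
    proof eventually_elim
      case (elim v)
      then have "0 \<le> Q v i" "\<bar>phi (v i)\<bar> \<le> K" "0 \<le> K"
        using Q i phi_bounded[of "v i"] by (auto simp: implements_def)
      then show ?case by (simp add: abs_mult mult_right_mono)
    qed
  qed
  have "(\<integral>v. phi (v i) * Q v i \<partial>V) = (\<integral>t. (\<integral>w. phi t * Q (w(i := t)) i \<partial>V) \<partial>M)"
    using integral_PiM_fun_upd[of "{..<n}" i "\<lambda>v. phi (v i) * Q v i"] int i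
    by (simp add: val_space_def)
  also have "\<dots> = (\<integral>t. phi t * myerson_pay win_prob t \<partial>M)"
  proof (rule integral_cong_AE)
    have "(\<lambda>p. Q ((snd p)(i := fst p)) i) \<in> borel_measurable (M \<Otimes>\<^sub>M V)"
      using measurable_compose[OF measurable_fun_upd_pair_V[OF i] Qm] .
    then have "(\<lambda>t. \<integral>w. Q (w(i := t)) i \<partial>V) \<in> borel_measurable M"
      by (intro V.borel_measurable_lebesgue_integral) (simp add: case_prod_beta')
    then show "(\<lambda>t. \<integral>w. phi t * Q (w(i := t)) i \<partial>V) \<in> borel_measurable M"
      using phi by (simp add: measurable_cong_sets[OF sets_values refl])
    show "(\<lambda>t. phi t * myerson_pay win_prob t) \<in> borel_measurable M"
      using phi win_prob.borel_measurable_myerson_pay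
      by (simp add: measurable_cong_sets[OF sets_values refl])
  qed (use values_bounded in \<open>auto simp: interim_payment[OF Q i]\<close>)
  finally show "(\<integral>v. phi (v i) * Q v i \<partial>V) = (\<integral>t. phi t * myerson_pay win_prob t \<partial>M)" .
qed

abbreviation wpb_revenue :: "(nat \<Rightarrow> real) \<Rightarrow> real" where
  "wpb_revenue v \<equiv> \<Sum>i<n. pay_wpb n M A v i"

lemma wpb_winner_cases:
  assumes v: "v \<in> space V"
  obtains (winner) k where "k < n" "\<forall>j<n. v j \<le> v k"
      "\<And>j. j < n \<Longrightarrow> pay_wpb n M A v j = (if j = k then bid (v k) else 0)"
    | (no_sale) "\<And>j. j < n \<Longrightarrow> pay_wpb n M A v j = 0" "\<And>j. j < n \<Longrightarrow> bid (v j) = 0"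
proof (cases "\<exists>k<n. A v k = 1")
  case True
  then obtain k where k: "k < n" "A v k = 1" by blast
  have "A v j = 0" if j: "j < n" "j \<noteq> k" for j
  proof -
    have "(\<Sum>l\<in>{k, j}. A v l) \<le> (\<Sum>l<n. A v l)"
      using k j A_01 v by (intro sum_mono2) fastforce+
    then have "A v j \<le> 0"
      using A_feas v k j by auto
    moreover have "A v j \<in> {0, 1}" using A_01 v j by blast
    ultimately show ?thesis by auto
  qed
  then show ?thesis
    using winner[of k] k A_win v by (auto simp: pay_wpb_eq)
next
  case False
  then have "A v j = 0" "\<not> r \<le> v j" if "j < n" for j
    using A_01 A_alloc v that by blast+
  then show ?thesis
    using no_sale by (simp add: pay_wpb_eq myerson_bid_def win_prob_def)
qed

lemma wpb_revenue_winner: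
  assumes "k < n" "\<And>j. j < n \<Longrightarrow> pay_wpb n M A v j = (if j = k then bid (v k) else 0)"
  shows "wpb_revenue v = bid (v k)"
proof -
  have "wpb_revenue v = (\<Sum>j<n. if j = k then bid (v k) else 0)"
    using assms(2) by (intro sum.cong) auto
  then show ?thesis
    using assms(1) by simp
qed

lemma bid_le_wpb_revenue:
  assumes "v \<in> space V" "i < n"
  shows "bid (v i) \<le> wpb_revenue v"
  using assms(1)
proof (cases rule: wpb_winner_cases)
  case (winner k)
  then show ?thesis
    using assms(2) wpb_revenue_winner monoD[OF win_prob.mono_myerson_bid] by simp
qed (use assms(2) in simp)

lemma wpb_revenue_weighted:
  assumes "v \<in> space V"
  shows "(\<Sum>j<n. c (bid (v j)) * pay_wpb n M A v j) = c (wpb_revenue v) * wpb_revenue v"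
  using assms
proof (cases rule: wpb_winner_cases)
  case (winner k)
  then have "(\<Sum>j<n. c (bid (v j)) * pay_wpb n M A v j) = (\<Sum>j<n. if j = k then c (bid (v k)) * bid (v k) else 0)"
    by (intro sum.cong) auto
  then show ?thesis
    using winner wpb_revenue_winner by simp
qed simp

lemma wpb_revenue_bounded:
  assumes "v \<in> space V" "\<forall>i<n. v i \<in> {0..vbar}"
  shows "wpb_revenue v \<in> {0..vbar}"
  using assms(1)
proof (cases rule: wpb_winner_cases)
  case (winner k)
  then show ?thesis
    using assms(2) wpb_revenue_winner win_prob.myerson_bid_nonneg win_prob.myerson_bid_le[of "v k"]
    by force
qed (simp add: vbar_nonneg)

lemma integrable_wpb_revenue_weighted:
  assumes Q: "implements n M vbar A Q" and D: "mono D"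
  shows "integrable V (\<lambda>v. D (wpb_revenue v) * (\<Sum>i<n. Q v i))"
proof (rule Bochner_Integration.integrable_bound)
  let ?K = "\<bar>D 0\<bar> + \<bar>D vbar\<bar>"
  show "integrable V (\<lambda>v. ?K * (\<Sum>i<n. Q v i))"
    using implements_integrable[OF Q] by (intro integrable_mult_right integrable_sum) auto
  have "(\<lambda>v. pay_wpb n M A v i) \<in> borel_measurable V" "(\<lambda>v. Q v i) \<in> borel_measurable V" if "i < n" for i
    using wpb_implements Q that by (simp_all add: implements_def)
  then show "(\<lambda>v. D (wpb_revenue v) * (\<Sum>i<n. Q v i)) \<in> borel_measurable V"
    using borel_measurable_mono[OF D] by (auto intro!: borel_measurable_times borel_measurable_sum
        measurable_compose[of "wpb_revenue" V borel D borel])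
  show "AE v in V. norm (D (wpb_revenue v) * (\<Sum>i<n. Q v i)) \<le> norm (?K * (\<Sum>i<n. Q v i))"
    using AE_values_bounded_V AE_space[of V]
  proof eventually_elim
    case (elim v)
    then have "\<bar>D (wpb_revenue v)\<bar> \<le> ?K"
      using mono_abs_le_on_Icc[OF D wpb_revenue_bounded] by blast
    moreover have "0 \<le> (\<Sum>i<n. Q v i)"
      using Q elim by (auto simp: implements_def intro!: sum_nonneg)
    ultimately show ?case
      by (simp add: abs_mult mult_right_mono)
  qed
qed

lemma integral_wpb_revenue_weighted_le:
  assumes P: "implements n M vbar A P" and D: "mono D"
  shows "(\<integral>v. D (wpb_revenue v) * wpb_revenue v \<partial>V) \<le> (\<integral>v. D (wpb_revenue v) * (\<Sum>i<n. P v i) \<partial>V)"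
proof -
  let ?phi = "\<lambda>t. D (bid t)"
  have phi: "?phi \<in> borel_measurable borel"
    using measurable_compose[OF win_prob.borel_measurable_myerson_bid borel_measurable_mono[OF D]] .
  have phi_bounded: "\<bar>?phi t\<bar> \<le> \<bar>D 0\<bar> + \<bar>D vbar\<bar>" if "t \<in> {0..vbar}" for t
    using that win_prob.myerson_bid_nonneg[of t] win_prob.myerson_bid_le[of t]
    by (intro mono_abs_le_on_Icc[OF D]) auto
  note weighted = integral_value_weighted_payment[where phi="?phi", OF _ _ phi phi_bounded]
  have "(\<integral>v. D (wpb_revenue v) * wpb_revenue v \<partial>V) = (\<integral>v. (\<Sum>i<n. ?phi (v i) * pay_wpb n M A v i) \<partial>V)"
    by (intro Bochner_Integration.integral_cong refl wpb_revenue_weighted[symmetric])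
  also have "\<dots> = (\<Sum>i<n. \<integral>v. ?phi (v i) * pay_wpb n M A v i \<partial>V)"
    using weighted(1)[OF wpb_implements] by (intro Bochner_Integration.integral_sum) auto
  also have "\<dots> = (\<Sum>i<n. \<integral>v. ?phi (v i) * P v i \<partial>V)"
    using weighted(2)[OF wpb_implements] weighted(2)[OF P] by simp
  also have "\<dots> = (\<integral>v. (\<Sum>i<n. ?phi (v i) * P v i) \<partial>V)"
    using weighted(1)[OF P] by (intro Bochner_Integration.integral_sum[symmetric]) auto
  also have "\<dots> \<le> (\<integral>v. D (wpb_revenue v) * (\<Sum>i<n. P v i) \<partial>V)"
  proof (intro integral_mono Bochner_Integration.integrable_sum weighted(1)[OF P]
      integrable_wpb_revenue_weighted[OF P D])
    fix v assume v: "v \<in> space V"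
    have "?phi (v i) * P v i \<le> D (wpb_revenue v) * P v i" if "i < n" for i
      using bid_le_wpb_revenue[OF v that] P v that
      by (intro mult_right_mono monoD[OF D]) (auto simp: implements_def)
    then show "(\<Sum>i<n. ?phi (v i) * P v i) \<le> D (wpb_revenue v) * (\<Sum>i<n. P v i)"
      unfolding sum_distrib_left by (intro sum_mono) simp
  qed auto
  finally show ?thesis .
qed

lemma integral_convex_wpb_revenue_le:
  assumes P: "implements n M vbar A P" and g: "convex_on UNIV g"
    and int_P: "integrable V (\<lambda>v. g (\<Sum>i<n. P v i))"
    and int_wpb: "integrable V (\<lambda>v. g (wpb_revenue v))"
  shows "(\<integral>v. g (wpb_revenue v) \<partial>V) \<le> (\<integral>v. g (\<Sum>i<n. P v i) \<partial>V)"
proof -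
  obtain D where D: "mono D" and subgradient: "\<And>x y. g y + D y * (x - y) \<le> g x"
    using convex_on_monotone_subgradient[OF g] by blast
  note int_P_weighted = integrable_wpb_revenue_weighted[OF P D]
    and int_wpb_weighted = integrable_wpb_revenue_weighted[OF wpb_implements D]
  have "(\<integral>v. g (wpb_revenue v) \<partial>V)
      + ((\<integral>v. D (wpb_revenue v) * (\<Sum>i<n. P v i) \<partial>V) - (\<integral>v. D (wpb_revenue v) * wpb_revenue v \<partial>V))
      = (\<integral>v. g (wpb_revenue v) + D (wpb_revenue v) * ((\<Sum>i<n. P v i) - wpb_revenue v) \<partial>V)"
    using int_wpb int_P_weighted int_wpb_weighted by (simp add: right_diff_distrib)
  also have "\<dots> \<le> (\<integral>v. g (\<Sum>i<n. P v i) \<partial>V)"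
    using int_wpb int_P_weighted int_wpb_weighted int_P subgradient
    by (intro integral_mono) (auto simp: right_diff_distrib)
  finally show ?thesis
    using integral_wpb_revenue_weighted_le[OF P D] by linarith
qed

end

theorem mainTheorem8:
  fixes n :: nat and f :: "real \<Rightarrow> real" and vbar r :: real
    and A :: "(nat \<Rightarrow> real) \<Rightarrow> nat \<Rightarrow> real"
    and M :: "real measure"
  assumes n: "1 < n"
    and vbar: "0 < vbar"
    and r: "0 \<le> r"
    and f_meas: "f \<in> borel_measurable lborel"
    and f_pos: "\<forall>x\<in>{0..vbar}. 0 < f x"
    and f_zero: "\<forall>x. x \<notin> {0..vbar} \<longrightarrow> f x = 0"
    and M_def: "M = density lborel (\<lambda>x. ennreal (f x))"
    and M_prob: "prob_space M"
    and A_meas: "\<forall>i<n. (\<lambda>v. A v i) \<in> borel_measurable (val_space n M)"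
    and A_01: "\<forall>v\<in>space (val_space n M). \<forall>i<n. A v i \<in> {0, 1}"
    and A_feas: "\<forall>v\<in>space (val_space n M). (\<Sum>i<n. A v i) \<le> 1"
    and A_win: "\<forall>v\<in>space (val_space n M). \<forall>i<n.
                  A v i = 1 \<longrightarrow> r \<le> v i \<and> (\<forall>j<n. v j \<le> v i)"
    and A_alloc: "\<forall>v\<in>space (val_space n M).
                  (\<exists>i<n. r \<le> v i) \<longrightarrow> (\<exists>i<n. A v i = 1)"
  shows "implements n M vbar A (pay_wpb n M A) \<and>
    (\<forall>P g. implements n M vbar A P \<longrightarrow> convex_on UNIV g \<longrightarrow>
       integrable (val_space n M) (\<lambda>v. g (\<Sum>i<n. P v i)) \<longrightarrow>
       integrable (val_space n M) (\<lambda>v. g (\<Sum>i<n. pay_wpb n M A v i)) \<longrightarrow>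
       (\<integral>v. g (\<Sum>i<n. pay_wpb n M A v i) \<partial>val_space n M)
         \<le> (\<integral>v. g (\<Sum>i<n. P v i) \<partial>val_space n M))"
proof -
  have f_ennreal: "(\<lambda>x. ennreal (f x)) \<in> borel_measurable lborel"
    using f_meas by measurable
  have sets_M: "sets M = sets borel"
    by (simp add: M_def)
  have no_atoms: "emeasure M {t} = 0" for t
    using f_ennreal by (simp add: M_def emeasure_density)
  have values_bounded: "AE t in M. t \<in> {0..vbar}"
    unfolding M_def using f_ennreal f_zero by (subst AE_density) (auto intro!: AE_I2)
  interpret reserve_auction M n vbar r A
    using M_prob sets_M no_atoms values_bounded r A_meas A_01 A_feas A_win A_alloc
    by (intro reserve_auction.intro reserve_auction_axioms.intro) auto
  show ?thesis
    using wpb_implements integral_convex_wpb_revenue_le by blast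
qed

end
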